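(* Let $R$ be a unital ring and let $(P,Q,\psi)$ be a unital $R$-system satisfying Condition (FS'). Let $\mathcal{T}_{(P,Q,\psi)}=\bigoplus_i\mathcal{T}_i$ be its Toeplitz ring, and define $\epsilon_0=\iota_R(1_R)$ and, for $i>0$, $\epsilon_i=\pi_{\iota_Q^i,\iota_P^i}(\mathrm{id}_{Q^{\otimes i}})\in\mathcal{T}_i\mathcal{T}_{-i}$. Then for every $i\ge0$: $\epsilon_is=s$ for all $s\in\mathcal{T}_i$, and $t\epsilon_i=t$ for all $t\in\mathcal{T}_{-i}$. Consequently $\mathcal{T}_i\mathcal{T}_{-i}$ is a unital ideal of $\mathcal{T}_0$ with multiplicative identity $\epsilon_i$, for every $i\ge0$.
   Context: For additive subsets $X,Y$ of a ring, $XY$ is the additive subgroup generated by products. An $R$-system is a triple $(P,Q,\psi)$ with $P,Q$ $R$-bimodules and $\psi:P\otimes_RQ\to R$ an $R$-bimodule homomorphism; it is unital if $R$ is unital and $1_R$ acts as identity on both sides of $P$ and $Q$. Put $P^{\otimes0}=Q^{\otimes0}=R$, $\psi_0(r\otimes r')=rr'$, $\psi_1=\psi$, and for $n>1$: $Q^{\otimes n}=Q^{\otimes(n-1)}\otimes_RQ$, $P^{\otimes n}=P\otimes_RP^{\otimes(n-1)}$, $\psi_n((p_1\otimes p_2)\otimes(q_2\otimes q_1))=\psi(p_1\psi_{n-1}(p_2\otimes q_2)\otimes q_1)$; $(P^{\otimes n},Q^{\otimes n},\psi_n)$ is again an $R$-system. For an $R$-system $(P,Q,\psi)$ and $q\in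 Q,p\in P$ let $\theta_{q,p}(x)=q\psi(p\otimes x)$ ($x\in Q$), $\theta_{p,q}(y)=\psi(y\otimes q)p$ ($y\in P$); $\mathcal{F}_P(Q)$, $\mathcal{F}_Q(P)$ are the additive groups generated by these maps. Condition (FS'): there exist $\Theta\in\mathcal{F}_P(Q)$, $\Phi\in\mathcal{F}_Q(P)$ with $\Theta(q)=q$, $\Phi(p)=p$ for all $q,p$. If $(P,Q,\psi)$ satisfies (FS'), so does each $(P^{\otimes n},Q^{\otimes n},\psi_n)$, and $\mathrm{id}_{Q^{\otimes n}}\in\mathcal{F}_{P^{\otimes n}}(Q^{\otimes n})$ in the unital case. A covariant representation of $(P,Q,\psi)$ is a tuple $(S,T,\sigma,B)$ with $B$ a ring, $S:P\to B$, $T:Q\to B$ additive maps, $\sigma:R\to B$ a ring homomorphism, with $S(pr)=S(p)\sigma(r)$, $S(rp)=\sigma(r)S(p)$, $T(qr)=T(q)\sigma(r)$, $T(rq)=\sigma(r)T(q)$, $\sigma(\psi(p\otimes q))=S(p)T(q)$; then with $S^n(p_1\otimes\cdots\otimes p_n)=S(p_1)\cdots S(p_n)$, $T^n(q_1\otimes\cdots\otimes q_n)=T(q_1)\cdots T(q_n)$, $(S^n,T^n,\sigma,B)$ is a covariant representation of $(P^{\otimes n},Q^{\otimes n},\psi_n)$, and there is a unique ring homomorphism $\pi_{T^n,S^n}:\mathcal{F}_{P^{\otimes n}}(Q^{\otimes n})\to B$ with $\pi_{T^n,S^n}(\theta_{q,p})=T^n(q)S^n(p)$. The Toeplitz representation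 $(\iota_P,\iota_Q,\iota_R,\mathcal{T}_{(P,Q,\psi)})$ is the universal covariant representation; its $\mathbb{Z}$-grading is $\mathcal{T}_i$ = additive group generated by the elements $\iota_Q^m(q)\iota_P^n(p)$ and $\iota_R(r)\iota_Q^m(q)\iota_P^n(p)$ for $q\in Q^{\otimes m}$, $p\in P^{\otimes n}$, $m-n=i$ (with $\iota^0=\iota_R$). *)

theory Defs
  imports Main "HOL-Library.Poly_Mapping"
begin

text \<open>The bimodule homomorphism
psi : P (x)_R Q -> R is given, via the universal property of the balanced tensor
product, as an R-balanced biadditive map that is left R-linear in P and right
R-linear in Q.\<close>

record ('r, 'p, 'q) rsys =
  lP  :: "'r \<Rightarrow> 'p \<Rightarrow> 'p"
  rP  :: "'p \<Rightarrow> 'r \<Rightarrow> 'p"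
  lQ  :: "'r \<Rightarrow> 'q \<Rightarrow> 'q"
  rQ  :: "'q \<Rightarrow> 'r \<Rightarrow> 'q"
  psi :: "'p \<Rightarrow> 'q \<Rightarrow> 'r"

definition bimodule :: "('r::ring_1 \<Rightarrow> 'm::ab_group_add \<Rightarrow> 'm) \<Rightarrow> ('m \<Rightarrow> 'r \<Rightarrow> 'm) \<Rightarrow> bool" where
  "bimodule l rt \<longleftrightarrow>
     (\<forall>r x y. l r (x + y) = l r x + l r y) \<and>
     (\<forall>r s x. l (r + s) x = l r x + l s x) \<and>
     (\<forall>r s x. l (r * s) x = l r (l s x)) \<and>
     (\<forall>r x y. rt (x + y) r = rt x r + rt y r) \<and>
     (\<forall>r s x. rt x (r + s) = rt x r + rt x s) \<and>
     (\<forall>r s x. rt x (r * s) = rt (rt x r) s) \<and>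
     (\<forall>r s x. l r (rt x s) = rt (l r x) s)"

definition unital_bimodule :: "('r::ring_1 \<Rightarrow> 'm::ab_group_add \<Rightarrow> 'm) \<Rightarrow> ('m \<Rightarrow> 'r \<Rightarrow> 'm) \<Rightarrow> bool" where
  "unital_bimodule l rt \<longleftrightarrow> bimodule l rt \<and> (\<forall>x. l 1 x = x) \<and> (\<forall>x. rt x 1 = x)"

definition psi_bimod_hom :: "('r::ring_1, 'p::ab_group_add, 'q::ab_group_add) rsys \<Rightarrow> bool" where
  "psi_bimod_hom S \<longleftrightarrow>
     (\<forall>p p' q. psi S (p + p') q = psi S p q + psi S p' q) \<and>
     (\<forall>p q q'. psi S p (q + q') = psi S p q + psi S p q') \<and>
     (\<forall>p r q. psi S (rP S p r) q = psi S p (lQ S r q)) \<and>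
     (\<forall>r p q. psi S (lP S r p) q = r * psi S p q) \<and>
     (\<forall>p q r. psi S p (rQ S q r) = psi S p q * r)"

text \<open>A unital R-system (R is unital because 'r is of class ring_1).\<close>
definition unital_rsystem :: "('r::ring_1, 'p::ab_group_add, 'q::ab_group_add) rsys \<Rightarrow> bool" where
  "unital_rsystem S \<longleftrightarrow> unital_bimodule (lP S) (rP S) \<and> unital_bimodule (lQ S) (rQ S)
      \<and> psi_bimod_hom S"

inductive_set FPQ :: "('r::ring_1, 'p::ab_group_add, 'q::ab_group_add) rsys \<Rightarrow> ('q \<Rightarrow> 'q) set"
  for S where
  zero: "(\<lambda>x. 0) \<in> FPQ S"
| gen: "(\<lambda>x. rQ S q (psi S p x)) \<in> FPQ S"
| add: "f \<in> FPQ S \<Longrightarrow> g \<in> FPQ S \<Longrightarrow> (\<lambda>x. f x + g x) \<in> FPQ S"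
| neg: "f \<in> FPQ S \<Longrightarrow> (\<lambda>x. - f x) \<in> FPQ S"

inductive_set FQP :: "('r::ring_1, 'p::ab_group_add, 'q::ab_group_add) rsys \<Rightarrow> ('p \<Rightarrow> 'p) set"
  for S where
  zero: "(\<lambda>y. 0) \<in> FQP S"
| gen: "(\<lambda>y. lP S (psi S y q) p) \<in> FQP S"
| add: "f \<in> FQP S \<Longrightarrow> g \<in> FQP S \<Longrightarrow> (\<lambda>y. f y + g y) \<in> FQP S"
| neg: "f \<in> FQP S \<Longrightarrow> (\<lambda>y. - f y) \<in> FQP S"

definition FS' :: "('r::ring_1, 'p::ab_group_add, 'q::ab_group_add) rsys \<Rightarrow> bool" where
  "FS' S \<longleftrightarrow> (\<exists>\<Theta>\<in>FPQ S. \<forall>q. \<Theta> q = q) \<and> (\<exists>\<Phi>\<in>FQP S. \<forall>p. \<Phi> p = p)"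

text \<open>Elementary tensors of P^{(x)n} are lists [p1,...,pn] (meaning p1 (x) ... (x) pn),
of Q^{(x)n} lists [q1,...,qn]. The pairing psi_n of the paper:
psi_n((p1 (x) p') (x) (q' (x) qn)) = psi(p1 psi_{n-1}(p' (x) q') (x) qn).\<close>
primrec psi_list :: "('r::ring_1, 'p, 'q) rsys \<Rightarrow> 'p list \<Rightarrow> 'q list \<Rightarrow> 'r" where
  "psi_list S [] qs = 1"
| "psi_list S (p # ps) qs =
     (if ps = [] then psi S p (last qs)
      else psi S (rP S p (psi_list S ps (butlast qs))) (last qs))"

definition rQ_list :: "('r, 'p, 'q) rsys \<Rightarrow> 'q list \<Rightarrow> 'r \<Rightarrow> 'q list" where
  "rQ_list S qs r = butlast qs @ [rQ S (last qs) r]"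

text \<open>Q^{(x)n} is the free abelian group on n-tuples (lists of length n) modulo the
subgroup generated by the multi-additivity and R-balancing relations.\<close>
inductive_set tens_rel :: "('r::ring_1, 'p, 'q::ab_group_add) rsys \<Rightarrow> nat \<Rightarrow> ('q list \<Rightarrow>\<^sub>0 int) set"
  for S n where
  additive: "length (us @ a # vs) = n \<Longrightarrow>
     Poly_Mapping.single (us @ (a + b) # vs) 1 - Poly_Mapping.single (us @ a # vs) 1
       - Poly_Mapping.single (us @ b # vs) 1 \<in> tens_rel S n"
| balanced: "length (us @ a # b # vs) = n \<Longrightarrow>
     Poly_Mapping.single (us @ rQ S a r # b # vs) 1
       - Poly_Mapping.single (us @ a # lQ S r b # vs) 1 \<in> tens_rel S n"
| zero: "0 \<in> tens_rel S n"
| add: "x \<in> tens_rel S n \<Longrightarrow> y \<in> tens_rel S n \<Longrightarrow> x + y \<in> tens_rel S n"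
| neg: "x \<in> tens_rel S n \<Longrightarrow> - x \<in> tens_rel S n"

text \<open>Elements of F_{P^{(x)n}}(Q^{(x)n}) (n > 0) together with their image under
pi_{T^n,S^n}. An operator is recorded by its values on elementary tensors of
length n (representatives in the free abelian group). The generators are
theta_{q,p} with q, p elementary (these generate the same additive group as
theta_{q,p} with arbitrary q, p, by biadditivity of theta); pi sends theta_{q,p}
to T^n(q) S^n(p).\<close>
fun lprod :: "'a::semigroup_mult list \<Rightarrow> 'a" where
  "lprod [] = undefined"
| "lprod [x] = x"
| "lprod (x # y # ys) = x * lprod (y # ys)"

inductive Fpi :: "('r::ring_1, 'p::ab_group_add, 'q::ab_group_add) rsys \<Rightarrow> nat \<Rightarrow>
    ('q \<Rightarrow> 'b::ring) \<Rightarrow> ('p \<Rightarrow> 'b) \<Rightarrow> ('q list \<Rightarrow> ('q list \<Rightarrow>\<^sub>0 int)) \<Rightarrow> 'b \<Rightarrow> bool"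
  for S n iQ iP where
  zero: "Fpi S n iQ iP (\<lambda>xs. 0) 0"
| gen: "length qs = n \<Longrightarrow> length ps = n \<Longrightarrow>
     Fpi S n iQ iP (\<lambda>xs. Poly_Mapping.single (rQ_list S qs (psi_list S ps xs)) 1)
                   (lprod (map iQ qs) * lprod (map iP ps))"
| add: "Fpi S n iQ iP f a \<Longrightarrow> Fpi S n iQ iP g b \<Longrightarrow> Fpi S n iQ iP (\<lambda>xs. f xs + g xs) (a + b)"
| neg: "Fpi S n iQ iP f a \<Longrightarrow> Fpi S n iQ iP (\<lambda>xs. - f xs) (- a)"

definition eps :: "('r::ring_1, 'p::ab_group_add, 'q::ab_group_add) rsys \<Rightarrow>
    ('r \<Rightarrow> 'b::ring) \<Rightarrow> ('q \<Rightarrow> 'b) \<Rightarrow> ('p \<Rightarrow> 'b) \<Rightarrow> nat \<Rightarrow> 'b" where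
  "eps S iR iQ iP i =
     (if i = 0 then iR 1
      else (SOME e. \<exists>\<Theta>. Fpi S i iQ iP \<Theta> e \<and>
              (\<forall>xs. length xs = i \<longrightarrow> \<Theta> xs - Poly_Mapping.single xs 1 \<in> tens_rel S i)))"

definition is_ring_hom :: "('a::ring \<Rightarrow> 'c::ring) \<Rightarrow> bool" where
  "is_ring_hom h \<longleftrightarrow> (\<forall>x y. h (x + y) = h x + h y \<and> h (x * y) = h x * h y)"

definition covrep :: "('r::ring_1, 'p::ab_group_add, 'q::ab_group_add) rsys \<Rightarrow>
    ('p \<Rightarrow> 'c::ring) \<Rightarrow> ('q \<Rightarrow> 'c) \<Rightarrow> ('r \<Rightarrow> 'c) \<Rightarrow> bool" where
  "covrep S Sm Tm \<sigma> \<longleftrightarrow>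
     (\<forall>x y. Sm (x + y) = Sm x + Sm y) \<and> (\<forall>x y. Tm (x + y) = Tm x + Tm y) \<and>
     is_ring_hom \<sigma> \<and>
     (\<forall>p r. Sm (rP S p r) = Sm p * \<sigma> r) \<and> (\<forall>r p. Sm (lP S r p) = \<sigma> r * Sm p) \<and>
     (\<forall>q r. Tm (rQ S q r) = Tm q * \<sigma> r) \<and> (\<forall>r q. Tm (lQ S r q) = \<sigma> r * Tm q) \<and>
     (\<forall>p q. \<sigma> (psi S p q) = Sm p * Tm q)"

text \<open>(iP, iQ, iR, 'b) is the Toeplitz representation: a covariant representation
that is universal among covariant representations into rings of type 'c.\<close>
definition toeplitz_rep :: "('r::ring_1, 'p::ab_group_add, 'q::ab_group_add) rsys \<Rightarrow>
    ('p \<Rightarrow> 'b::ring) \<Rightarrow> ('q \<Rightarrow> 'b) \<Rightarrow> ('r \<Rightarrow> 'b) \<Rightarrow> 'c::ring itself \<Rightarrow> bool" where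
  "toeplitz_rep S iP iQ iR _ \<longleftrightarrow> covrep S iP iQ iR \<and>
     (\<forall>(Sm::'p \<Rightarrow> 'c) Tm \<sigma>. covrep S Sm Tm \<sigma> \<longrightarrow>
        (\<exists>!h. is_ring_hom h \<and> (\<forall>p. h (iP p) = Sm p) \<and> (\<forall>q. h (iQ q) = Tm q) \<and>
              (\<forall>r. h (iR r) = \<sigma> r)))"

inductive_set add_span :: "'a::ab_group_add set \<Rightarrow> 'a set" for A where
  zero: "0 \<in> add_span A"
| gen: "a \<in> A \<Longrightarrow> a \<in> add_span A"
| add: "x \<in> add_span A \<Longrightarrow> y \<in> add_span A \<Longrightarrow> x + y \<in> add_span A"
| neg: "x \<in> add_span A \<Longrightarrow> - x \<in> add_span A"

definition set_prod :: "'a::ring set \<Rightarrow> 'a set \<Rightarrow> 'a set" where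
  "set_prod X Y = add_span {x * y | x y. x \<in> X \<and> y \<in> Y}"

definition Qimg :: "('r \<Rightarrow> 'b::ring) \<Rightarrow> ('q \<Rightarrow> 'b) \<Rightarrow> nat \<Rightarrow> 'b set" where
  "Qimg iR iQ m = (if m = 0 then range iR else {lprod (map iQ qs) | qs. length qs = m})"

definition Pimg :: "('r \<Rightarrow> 'b::ring) \<Rightarrow> ('p \<Rightarrow> 'b) \<Rightarrow> nat \<Rightarrow> 'b set" where
  "Pimg iR iP n = (if n = 0 then range iR else {lprod (map iP ps) | ps. length ps = n})"

definition Tdeg :: "('r \<Rightarrow> 'b::ring) \<Rightarrow> ('q \<Rightarrow> 'b) \<Rightarrow> ('p \<Rightarrow> 'b) \<Rightarrow> int \<Rightarrow> 'b set" where
  "Tdeg iR iQ iP i = add_span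
     ({a * b | a b m n. a \<in> Qimg iR iQ m \<and> b \<in> Pimg iR iP n \<and> int m - int n = i} \<union>
      {iR r * a * b | r a b m n. a \<in> Qimg iR iQ m \<and> b \<in> Pimg iR iP n \<and> int m - int n = i})"

end

theory Submission
  imports Defs "HOL-Algebra.Group"
begin

text \<open>
  By (FS') the identity of Q is a finite sum of rank-one operators \<open>\<theta>\<^sub>q\<^sub>,\<^sub>p\<close>. Tensoring the
  identity of \<open>Q\<^sup>\<otimes>\<^sup>n\<close> with such a decomposition yields, by induction on n, an element of
  \<open>\<F>\<^bsub>P\<^sup>\<otimes>\<^sup>i\<^esub>(Q\<^sup>\<otimes>\<^sup>i)\<close> that is the identity modulo the tensor relations; as
  \<open>\<pi>(\<Theta>) \<iota>\<^sub>Q\<^sup>i(\<xi>) = \<iota>\<^sub>Q\<^sup>i(\<Theta> \<xi>)\<close>, the element \<open>\<epsilon>\<^sub>i\<close> is a left unit for every \<open>\<iota>\<^sub>Q\<^sup>i(\<xi>)\<close>.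
  Dually, the decomposition of the identity of P produces an element E in the additive span of
  the products \<open>\<iota>\<^sub>Q\<^sup>i(\<xi>) \<iota>\<^sub>P\<^sup>i(\<eta>)\<close> that is a right unit for every \<open>\<iota>\<^sub>P\<^sup>i(\<eta>)\<close>. Since
  \<open>\<epsilon>\<^sub>i\<close> lies in the same span, \<open>\<epsilon>\<^sub>i = \<epsilon>\<^sub>i E = E\<close>. Every spanning element of \<open>\<T>\<^sub>i\<close> begins
  with some \<open>\<iota>\<^sub>Q\<^sup>m(\<xi>)\<close>, \<open>m \<ge> i\<close>, and every spanning element of \<open>\<T>\<^sub>-\<^sub>i\<close> ends with some
  \<open>\<iota>\<^sub>P\<^sup>n(\<eta>)\<close>, \<open>n \<ge> i\<close>; this gives the unit properties. That \<open>\<T>\<^sub>i\<T>\<^sub>-\<^sub>i\<close> is an ideal of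
  \<open>\<T>\<^sub>0\<close> is the grading \<open>\<T>\<^sub>j\<T>\<^sub>k \<subseteq> \<T>\<^sub>j\<^sub>+\<^sub>k\<close>.
\<close>

lemma lprod_Cons: "ys \<noteq> [] \<Longrightarrow> lprod (x # ys) = x * lprod ys"
  by (cases ys) auto

lemma lprod_append: "xs \<noteq> [] \<Longrightarrow> ys \<noteq> [] \<Longrightarrow> lprod (xs @ ys) = lprod xs * lprod ys"
  by (induction xs rule: lprod.induct) (auto simp: lprod_Cons mult.assoc)

lemma lprod_snoc: "ys \<noteq> [] \<Longrightarrow> lprod (ys @ [x]) = lprod ys * x"
  using lprod_append[of ys "[x]"] by simp

lemma lprod_mid_cong:
  assumes "lprod xs = lprod ys" "xs \<noteq> []" "ys \<noteq> []"
  shows "lprod (us @ xs @ vs) = lprod (us @ ys @ vs)"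
  using assms by (cases "us = []"; cases "vs = []") (auto simp: lprod_append)

lemma lprod_mid_add:
  fixes x y :: "'a::ring"
  shows "lprod (us @ (x + y) # vs) = lprod (us @ x # vs) + lprod (us @ y # vs)"
  by (cases "us = []"; cases "vs = []")
     (auto simp: lprod_append[of us] lprod_Cons distrib_left distrib_right)

lemma lprod_take_drop:
  assumes "0 < k" "k < length xs"
  shows "lprod xs = lprod (take k xs) * lprod (drop k xs)"
  using assms lprod_append[of "take k xs" "drop k xs"] by (cases xs) auto

lemma add_span_minimal: "A \<subseteq> add_span C \<Longrightarrow> add_span A \<subseteq> add_span C"
proof
  show "x \<in> add_span C" if "A \<subseteq> add_span C" "x \<in> add_span A" for x
    using that(2,1) by (induction x rule: add_span.induct) (auto intro: add_span.intros)
qed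

lemma add_span_left_unit:
  fixes e :: "'a::ring"
  assumes "\<And>g. g \<in> A \<Longrightarrow> e * g = g" "x \<in> add_span A"
  shows "e * x = x"
  using assms(2) by (induction x rule: add_span.induct) (auto simp: assms(1) distrib_left)

lemma add_span_right_unit:
  fixes e :: "'a::ring"
  assumes "\<And>g. g \<in> A \<Longrightarrow> g * e = g" "x \<in> add_span A"
  shows "x * e = x"
  using assms(2) by (induction x rule: add_span.induct) (auto simp: assms(1) distrib_right)

lemma add_span_mult_closed:
  fixes x y :: "'a::ring"
  assumes "x \<in> add_span A" "y \<in> add_span B"
    and "\<And>a b. a \<in> A \<Longrightarrow> b \<in> B \<Longrightarrow> a * b \<in> add_span C"
  shows "x * y \<in> add_span C"
  using assms(1)
proof (induction x rule: add_span.induct)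
  case (gen a)
  show ?case
    using assms(2) by (induction y rule: add_span.induct)
      (auto simp: gen assms(3) distrib_left intro: add_span.intros)
qed (auto simp: distrib_right intro: add_span.intros)

lemma set_prod_subset:
  "(\<And>x y. x \<in> X \<Longrightarrow> y \<in> Y \<Longrightarrow> x * y \<in> add_span C) \<Longrightarrow> set_prod X Y \<subseteq> add_span C"
  unfolding set_prod_def by (rule add_span_minimal) blast

lemma set_prod_mult_left:
  fixes a :: "'a::ring"
  assumes "\<And>x. x \<in> X \<Longrightarrow> a * x \<in> X" "z \<in> set_prod X Y"
  shows "a * z \<in> set_prod X Y"
  using assms(2) unfolding set_prod_def
proof (induction z rule: add_span.induct)
  case (gen g)
  then obtain x y where "g = x * y" "x \<in> X" "y \<in> Y" by blast
  then show ?case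
    using assms(1) by (metis (mono_tags, lifting) CollectI add_span.gen mult.assoc)
qed (auto simp: distrib_left intro: add_span.intros)

lemma set_prod_mult_right:
  fixes a :: "'a::ring"
  assumes "\<And>y. y \<in> Y \<Longrightarrow> y * a \<in> Y" "z \<in> set_prod X Y"
  shows "z * a \<in> set_prod X Y"
  using assms(2) unfolding set_prod_def
proof (induction z rule: add_span.induct)
  case (gen g)
  then obtain x y where "g = x * y" "x \<in> X" "y \<in> Y" by blast
  then show ?case
    using assms(1) by (metis (mono_tags, lifting) CollectI add_span.gen mult.assoc)
qed (auto simp: distrib_right intro: add_span.intros)

text \<open>The Toeplitz ring need not be unital, so integer multiples are taken in the additive
  group rather than through \<open>of_int\<close>.\<close>

definition additive_monoid :: "'a::ab_group_add monoid" where
  "additive_monoid = \<lparr>carrier = UNIV, monoid.mult = (+), one = 0\<rparr>"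

lemma carrier_additive_monoid [simp]: "carrier additive_monoid = UNIV"
  by (simp add: additive_monoid_def)

lemma group_additive_monoid: "group (additive_monoid :: 'a::ab_group_add monoid)"
  by (rule groupI) (auto simp: additive_monoid_def add.assoc intro: exI[of _ "- x" for x])

lemma inv_additive_monoid: "inv\<^bsub>additive_monoid\<^esub> x = - (x :: 'a::ab_group_add)"
  by (rule group.inv_equality[OF group_additive_monoid]) (auto simp: additive_monoid_def)

definition int_mult :: "int \<Rightarrow> 'a::ab_group_add \<Rightarrow> 'a" where
  "int_mult k x = x [^]\<^bsub>additive_monoid\<^esub> k"

lemma int_mult_add: "int_mult (k + l) x = int_mult k x + int_mult l x"
  using group.int_pow_mult[OF group_additive_monoid] by (simp add: int_mult_def additive_monoid_def)

lemma int_mult_uminus: "int_mult (- k) x = - int_mult k x"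
  using group.int_pow_neg[OF group_additive_monoid] by (simp add: int_mult_def inv_additive_monoid)

lemma int_mult_0 [simp]: "int_mult 0 x = 0" and int_mult_1 [simp]: "int_mult 1 x = x"
  using group.int_pow_1[OF group_additive_monoid] by (simp_all add: int_mult_def additive_monoid_def)

definition frag_eval :: "('c \<Rightarrow> 'a::ab_group_add) \<Rightarrow> ('c \<Rightarrow>\<^sub>0 int) \<Rightarrow> 'a" where
  "frag_eval f g = (\<Sum>i\<in>Poly_Mapping.keys g. int_mult (Poly_Mapping.lookup g i) (f i))"

lemma frag_eval_superset:
  "finite A \<Longrightarrow> Poly_Mapping.keys g \<subseteq> A \<Longrightarrow>
    frag_eval f g = (\<Sum>i\<in>A. int_mult (Poly_Mapping.lookup g i) (f i))"
  unfolding frag_eval_def by (rule sum.mono_neutral_left) (auto simp: in_keys_iff)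

lemma frag_eval_0 [simp]: "frag_eval f 0 = 0"
  and frag_eval_of [simp]: "frag_eval f (frag_of a) = f a"
  by (simp_all add: frag_eval_def)

lemma frag_eval_add: "frag_eval f (g + h) = frag_eval f g + frag_eval f h"
proof -
  let ?A = "Poly_Mapping.keys g \<union> Poly_Mapping.keys h"
  have "frag_eval f (g + h) = (\<Sum>i\<in>?A. int_mult (Poly_Mapping.lookup (g + h) i) (f i))"
    by (rule frag_eval_superset) (auto simp: keys_add)
  also have "\<dots> = frag_eval f g + frag_eval f h"
    by (simp add: frag_eval_superset[of ?A] lookup_add int_mult_add sum.distrib)
  finally show ?thesis .
qed

lemma frag_eval_uminus: "frag_eval f (- g) = - frag_eval f g"
  by (simp add: frag_eval_def int_mult_uminus sum_negf)

lemma frag_eval_diff: "frag_eval f (g - h) = frag_eval f g - frag_eval f h"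
  by (metis frag_eval_add frag_eval_uminus diff_conv_add_uminus)

text \<open>\<open>Pimg\<close> and \<open>Qimg\<close> are the same constant (\<open>Pimg_eq_Qimg\<close>), so one locale treats the
  images of both tensor powers.\<close>

locale bimodule_rep =
  fixes iR :: "'r::ring_1 \<Rightarrow> 'b::ring" and iX :: "'x \<Rightarrow> 'b"
    and l :: "'r \<Rightarrow> 'x \<Rightarrow> 'x" and rt :: "'x \<Rightarrow> 'r \<Rightarrow> 'x"
  assumes iR_mult: "iR (r * s) = iR r * iR s"
    and iX_left: "iX (l r x) = iR r * iX x"
    and iX_right: "iX (rt x r) = iX x * iR r"
    and left_one: "l 1 x = x"
    and right_one: "rt x 1 = x"
begin

lemma iR_mult_lprod: "iR r * lprod (iX x # map iX xs) = lprod (iX (l r x) # map iX xs)"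
  by (cases xs) (auto simp: lprod_Cons iX_left mult.assoc)

lemma lprod_mult_iR: "lprod (map iX xs @ [iX x]) * iR r = lprod (map iX xs @ [iX (rt x r)])"
  by (cases "xs = []") (auto simp: lprod_snoc iX_right mult.assoc)

lemma lprod_in_Qimg: "length xs = m \<Longrightarrow> 0 < m \<Longrightarrow> lprod (map iX xs) \<in> Qimg iR iX m"
  by (auto simp: Qimg_def)

lemma Qimg_cases:
  assumes "a \<in> Qimg iR iX m"
  obtains r where "m = 0" "a = iR r"
    | xs where "0 < m" "length xs = m" "a = lprod (map iX xs)"
  using assms by (cases "m = 0") (auto simp: Qimg_def)

lemma Qimg_mult:
  assumes a: "a \<in> Qimg iR iX m" and c: "c \<in> Qimg iR iX k"
  shows "a * c \<in> Qimg iR iX (m + k)"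
  using a
proof (cases rule: Qimg_cases)
  case (1 r)
  show ?thesis using c
  proof (cases rule: Qimg_cases)
    case (1 s)
    then show ?thesis using \<open>m = 0\<close> \<open>a = iR r\<close> by (simp add: Qimg_def iR_mult[symmetric])
  next
    case (2 xs)
    then obtain y ys where "xs = y # ys" by (cases xs) auto
    then show ?thesis using 2 \<open>m = 0\<close> \<open>a = iR r\<close> lprod_in_Qimg[of "l r y # ys" k]
      by (simp add: iR_mult_lprod)
  qed
next
  case (2 xs)
  show ?thesis using c
  proof (cases rule: Qimg_cases)
    case (1 s)
    obtain ys y where "xs = ys @ [y]" using \<open>0 < m\<close> \<open>length xs = m\<close> by (cases xs rule: rev_cases) auto
    then show ?thesis using 1 2 lprod_in_Qimg[of "ys @ [rt y s]" m] by (simp add: lprod_mult_iR)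
  next
    case (2 ys)
    then have "a * c = lprod (map iX (xs @ ys))"
      using \<open>a = lprod (map iX xs)\<close> \<open>0 < m\<close> \<open>length xs = m\<close> by (auto simp: lprod_append)
    then show ?thesis using 2 \<open>length xs = m\<close> lprod_in_Qimg[of "xs @ ys" "m + k"] by simp
  qed
qed

lemma iR_one_mult_Qimg: "a \<in> Qimg iR iX m \<Longrightarrow> iR 1 * a = a"
proof (induction rule: Qimg_cases)
  case (2 xs)
  then show ?case by (cases xs) (auto simp: iR_mult_lprod left_one)
qed (simp add: iR_mult[symmetric])

lemma Qimg_mult_iR_one: "a \<in> Qimg iR iX m \<Longrightarrow> a * iR 1 = a"
proof (induction rule: Qimg_cases)
  case (2 xs)
  then show ?case by (cases xs rule: rev_cases) (auto simp: lprod_mult_iR right_one)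
qed (simp add: iR_mult[symmetric])

end

lemma Pimg_eq_Qimg: "Pimg = Qimg"
  by (simp add: fun_eq_iff Pimg_def Qimg_def)

locale covariant_rep =
  fixes S :: "('r::ring_1, 'p::ab_group_add, 'q::ab_group_add) rsys"
    and iP :: "'p \<Rightarrow> 'b::ring" and iQ :: "'q \<Rightarrow> 'b" and iR :: "'r \<Rightarrow> 'b"
  assumes unital: "unital_rsystem S" and cov: "covrep S iP iQ iR"
begin

lemma iP_add [simp]: "iP (x + y) = iP x + iP y"
  and iQ_add [simp]: "iQ (u + v) = iQ u + iQ v"
  and iR_mult [simp]: "iR (r * s) = iR r * iR s"
  and iP_rP [simp]: "iP (rP S p r) = iP p * iR r"
  and iP_lP [simp]: "iP (lP S s p) = iR s * iP p"
  and iQ_rQ [simp]: "iQ (rQ S q s) = iQ q * iR s"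
  and iQ_lQ [simp]: "iQ (lQ S s q) = iR s * iQ q"
  and iR_psi [simp]: "iR (psi S p q) = iP p * iQ q"
  using cov by (simp_all add: covrep_def is_ring_hom_def)

lemma iP_zero [simp]: "iP 0 = 0"
  using iP_add[of 0 0] by simp

lemma iP_uminus [simp]: "iP (- p) = - iP p"
  using minus_unique[of "iP p" "iP (- p)"] iP_add[of p "- p"] by simp

lemma lQ_one [simp]: "lQ S 1 q = q" and rQ_one [simp]: "rQ S q 1 = q"
  and lP_one [simp]: "lP S 1 p = p" and rP_one [simp]: "rP S p 1 = p"
  using unital by (auto simp: unital_rsystem_def unital_bimodule_def)

lemma psi_balanced: "psi S (rP S p r) q = psi S p (lQ S r q)"
  using unital by (simp add: unital_rsystem_def psi_bimod_hom_def)

sublocale Q: bimodule_rep iR iQ "lQ S" "rQ S"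
  by unfold_locales simp_all

sublocale P: bimodule_rep iR iP "lP S" "rP S"
  by unfold_locales simp_all

lemma Pimg_cases:
  assumes "b \<in> Pimg iR iP n"
  obtains r where "n = 0" "b = iR r"
    | ps where "0 < n" "length ps = n" "b = lprod (map iP ps)"
  using assms unfolding Pimg_eq_Qimg by (rule P.Qimg_cases)

lemmas Pimg_mult = P.Qimg_mult[folded Pimg_eq_Qimg]
  and lprod_in_Pimg = P.lprod_in_Qimg[folded Pimg_eq_Qimg]
  and Pimg_mult_iR_one = P.Qimg_mult_iR_one[folded Pimg_eq_Qimg]

abbreviation iQn :: "'q list \<Rightarrow> 'b" where "iQn qs \<equiv> lprod (map iQ qs)"
abbreviation iPn :: "'p list \<Rightarrow> 'b" where "iPn ps \<equiv> lprod (map iP ps)"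

lemma iPn_mult_iQn:
  "length ps = length xs \<Longrightarrow> ps \<noteq> [] \<Longrightarrow> iPn ps * iQn xs = iR (psi_list S ps xs)"
proof (induction ps arbitrary: xs)
  case (Cons p ps)
  show ?case
  proof (cases "ps = []")
    case True
    with Cons.prems show ?thesis by (cases xs) auto
  next
    case False
    obtain ys y where xs: "xs = ys @ [y]"
      using Cons.prems by (cases xs rule: rev_cases) auto
    with Cons.prems False have "ys \<noteq> []" by auto
    have "iPn (p # ps) * iQn xs = iP p * (iPn ps * iQn ys) * iQ y"
      using False xs \<open>ys \<noteq> []\<close> by (simp add: lprod_Cons lprod_snoc mult.assoc)
    then show ?thesis using Cons False xs \<open>ys \<noteq> []\<close> by simp
  qed
qed simp

lemma Pimg_mult_Qimg:
  assumes b: "b \<in> Pimg iR iP n" and c: "c \<in> Qimg iR iQ m"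
  shows "(n \<le> m \<and> b * c \<in> Qimg iR iQ (m - n)) \<or> (m \<le> n \<and> b * c \<in> Pimg iR iP (n - m))"
  using b
proof (cases rule: Pimg_cases)
  case (1 r)
  then have "b \<in> Qimg iR iQ 0" by (simp add: Qimg_def)
  then show ?thesis using Q.Qimg_mult[of b 0 c m] c \<open>n = 0\<close> by simp
next
  case (2 ps)
  show ?thesis using c
  proof (cases rule: Q.Qimg_cases)
    case (1 r)
    then have "c \<in> Pimg iR iP 0" by (simp add: Pimg_def)
    then show ?thesis using Pimg_mult[of b n c 0] b \<open>m = 0\<close> by simp
  next
    case (2 qs)
    consider "n = m" | "n < m" | "m < n" by linarith
    then show ?thesis
    proof cases
      case 1
      then have "b * c = iR (psi_list S ps qs)"
        using 2 \<open>b = iPn ps\<close> \<open>length ps = n\<close> \<open>0 < n\<close> by (auto intro: iPn_mult_iQn)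
      then show ?thesis using 1 by (simp add: Qimg_def)
    next
      case 3
      have "iPn ps = iPn (take (n - m) ps) * iPn (drop (n - m) ps)"
        using lprod_take_drop[of "n - m" "map iP ps"] 3 2 \<open>length ps = n\<close> by (simp add: take_map drop_map)
      moreover have "iPn (drop (n - m) ps) * iQn qs = iR (psi_list S (drop (n - m) ps) qs)"
        using 3 2 \<open>length ps = n\<close> by (intro iPn_mult_iQn) auto
      ultimately have "b * c = iPn (take (n - m) ps) * iR (psi_list S (drop (n - m) ps) qs)"
        using \<open>b = iPn ps\<close> 2 by (simp add: mult.assoc)
      moreover have "iPn (take (n - m) ps) \<in> Pimg iR iP (n - m)"
        using 3 \<open>length ps = n\<close> by (intro lprod_in_Pimg) auto
      moreover have "iR (psi_list S (drop (n - m) ps) qs) \<in> Pimg iR iP 0"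
        by (simp add: Pimg_def)
      ultimately show ?thesis using 3 Pimg_mult[of _ "n - m" _ 0] by auto
    next
      case 2
      have "iQn qs = iQn (take n qs) * iQn (drop n qs)"
        using lprod_take_drop[of n "map iQ qs"] 2 \<open>length qs = m\<close> \<open>0 < n\<close>
        by (simp add: take_map drop_map)
      moreover have "iPn ps * iQn (take n qs) = iR (psi_list S ps (take n qs))"
        using 2 \<open>length ps = n\<close> \<open>length qs = m\<close> \<open>0 < n\<close> by (intro iPn_mult_iQn) auto
      ultimately have "b * c = iR (psi_list S ps (take n qs)) * iQn (drop n qs)"
        using \<open>b = iPn ps\<close> \<open>c = iQn qs\<close> by (simp add: mult.assoc[symmetric])
      moreover have "iQn (drop n qs) \<in> Qimg iR iQ (m - n)"
        using 2 \<open>length qs = m\<close> by (intro Q.lprod_in_Qimg) auto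
      moreover have "iR (psi_list S ps (take n qs)) \<in> Qimg iR iQ 0"
        by (simp add: Qimg_def)
      ultimately show ?thesis using 2 Q.Qimg_mult[of _ 0 _ "m - n"] by auto
    qed
  qed
qed

definition Tgen :: "int \<Rightarrow> 'b set" where
  "Tgen i = {a * b | a b m n. a \<in> Qimg iR iQ m \<and> b \<in> Pimg iR iP n \<and> int m - int n = i}"

lemma Tgen_intro:
  "a \<in> Qimg iR iQ m \<Longrightarrow> b \<in> Pimg iR iP n \<Longrightarrow> int m - int n = i \<Longrightarrow> a * b \<in> Tgen i"
  unfolding Tgen_def by blast

lemma Tdeg_eq: "Tdeg iR iQ iP i = add_span (Tgen i)"
proof -
  have "iR r * a * b \<in> Tgen i"
    if "a \<in> Qimg iR iQ m" "b \<in> Pimg iR iP n" "int m - int n = i" for r a b m n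
  proof -
    have "iR r \<in> Qimg iR iQ 0" by (simp add: Qimg_def)
    from Q.Qimg_mult[OF this that(1)] show ?thesis using Tgen_intro that(2,3) by simp
  qed
  then show ?thesis
    unfolding Tdeg_def Tgen_def[symmetric]
    by (intro equalityI add_span_minimal) (auto intro: add_span.gen)
qed

lemma Tgen_mult: "x \<in> Tgen i \<Longrightarrow> y \<in> Tgen j \<Longrightarrow> x * y \<in> Tgen (i + j)"
proof -
  assume "x \<in> Tgen i" "y \<in> Tgen j"
  then obtain a b m n c d m' n' where
    x: "x = a * b" "a \<in> Qimg iR iQ m" "b \<in> Pimg iR iP n" "int m - int n = i" and
    y: "y = c * d" "c \<in> Qimg iR iQ m'" "d \<in> Pimg iR iP n'" "int m' - int n' = j"
    unfolding Tgen_def by blast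
  have xy: "x * y = a * (b * c) * d" "x * y = a * ((b * c) * d)"
    using x y by (simp_all add: mult.assoc)
  from Pimg_mult_Qimg[OF x(3) y(2)] show ?thesis
  proof
    assume "n \<le> m' \<and> b * c \<in> Qimg iR iQ (m' - n)"
    then have "a * (b * c) \<in> Qimg iR iQ (m + (m' - n))" "int (m + (m' - n)) - int n' = i + j"
      using Q.Qimg_mult[OF x(2), of "b * c" "m' - n"] x(4) y(4) by auto
    then show ?thesis using xy(1) Tgen_intro y(3) by metis
  next
    assume "m' \<le> n \<and> b * c \<in> Pimg iR iP (n - m')"
    then have "(b * c) * d \<in> Pimg iR iP (n - m' + n')" "int m - int (n - m' + n') = i + j"
      using Pimg_mult[OF _ y(3), of "b * c" "n - m'"] x(4) y(4) by auto
    then show ?thesis using xy(2) Tgen_intro x(2) by metis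
  qed
qed

lemma Tdeg_mult:
  "x \<in> Tdeg iR iQ iP i \<Longrightarrow> y \<in> Tdeg iR iQ iP j \<Longrightarrow> x * y \<in> Tdeg iR iQ iP (i + j)"
  unfolding Tdeg_eq by (rule add_span_mult_closed) (auto intro: add_span.gen Tgen_mult)

lemma Qimg_subset_Tdeg: "a \<in> Qimg iR iQ m \<Longrightarrow> a \<in> Tdeg iR iQ iP (int m)"
  using Tgen_intro[of a m "iR 1" 0] Q.Qimg_mult_iR_one[of a m]
  by (simp add: Tdeg_eq Pimg_def add_span.gen)

lemma Pimg_subset_Tdeg: "b \<in> Pimg iR iP n \<Longrightarrow> b \<in> Tdeg iR iQ iP (- int n)"
  using Tgen_intro[of "iR 1" 0 b n] P.iR_one_mult_Qimg[of b n]
  by (simp add: Tdeg_eq Qimg_def Pimg_eq_Qimg add_span.gen)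

lemma set_prod_Tdeg_ideal:
  assumes "a \<in> Tdeg iR iQ iP 0" "x \<in> set_prod (Tdeg iR iQ iP i) (Tdeg iR iQ iP (- i))"
  shows "a * x \<in> set_prod (Tdeg iR iQ iP i) (Tdeg iR iQ iP (- i))"
    and "x * a \<in> set_prod (Tdeg iR iQ iP i) (Tdeg iR iQ iP (- i))"
  using assms Tdeg_mult[OF assms(1), of _ i] Tdeg_mult[of _ "- i" a 0]
  by (auto intro: set_prod_mult_left set_prod_mult_right)

lemma set_prod_Tdeg_subset: "set_prod (Tdeg iR iQ iP i) (Tdeg iR iQ iP (- i)) \<subseteq> Tdeg iR iQ iP 0"
  unfolding Tdeg_eq[of 0]
  by (rule set_prod_subset) (metis Tdeg_eq Tdeg_mult add.right_inverse)

end

definition tens_cong :: "('r::ring_1, 'p, 'q::ab_group_add) rsys \<Rightarrow> nat \<Rightarrow>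
    ('q list \<Rightarrow>\<^sub>0 int) \<Rightarrow> ('q list \<Rightarrow>\<^sub>0 int) \<Rightarrow> bool" where
  "tens_cong S n g h \<longleftrightarrow> g - h \<in> tens_rel S n"

lemma tens_cong_refl [simp]: "tens_cong S n g g"
  by (simp add: tens_cong_def tens_rel.zero)

lemma tens_cong_sym: "tens_cong S n g h \<Longrightarrow> tens_cong S n h g"
  unfolding tens_cong_def by (drule tens_rel.neg) simp

lemma tens_cong_trans: "tens_cong S n g h \<Longrightarrow> tens_cong S n h k \<Longrightarrow> tens_cong S n g k"
  unfolding tens_cong_def by (drule (1) tens_rel.add) simp

lemma tens_cong_add:
  "tens_cong S n g g' \<Longrightarrow> tens_cong S n h h' \<Longrightarrow> tens_cong S n (g + h) (g' + h')"
  unfolding tens_cong_def by (drule (1) tens_rel.add) (simp add: algebra_simps)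

lemma tens_cong_uminus: "tens_cong S n g h \<Longrightarrow> tens_cong S n (- g) (- h)"
  unfolding tens_cong_def by (drule tens_rel.neg) simp

lemma tens_cong_additive:
  "length (us @ a # vs) = n \<Longrightarrow>
    tens_cong S n (frag_of (us @ (a + b) # vs)) (frag_of (us @ a # vs) + frag_of (us @ b # vs))"
  unfolding tens_cong_def by (drule tens_rel.additive) (simp add: diff_diff_eq)

lemma tens_cong_balanced:
  "length (us @ a # b # vs) = n \<Longrightarrow>
    tens_cong S n (frag_of (us @ rQ S a r # b # vs)) (frag_of (us @ a # lQ S r b # vs))"
  unfolding tens_cong_def by (rule tens_rel.balanced)

lemma tens_cong_zero_entry:
  assumes "length (us @ a # vs) = n"
  shows "tens_cong S n (frag_of (us @ 0 # vs)) 0"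
proof -
  have "- frag_of (us @ 0 # vs) \<in> tens_rel S n"
    using tens_rel.additive[of us 0 vs n 0 S] assms by simp
  then show ?thesis unfolding tens_cong_def using tens_rel.neg by fastforce
qed

lemma tens_cong_uminus_entry:
  assumes "length (us @ a # vs) = n"
  shows "tens_cong S n (frag_of (us @ (- a) # vs)) (- frag_of (us @ a # vs))"
proof -
  have "tens_cong S n (frag_of (us @ (- a) # vs) + frag_of (us @ a # vs)) 0"
    using tens_cong_additive[of us "- a" vs n S a] tens_cong_zero_entry[of us a vs n S] assms
    by (auto intro: tens_cong_trans tens_cong_sym)
  then show ?thesis by (simp add: tens_cong_def)
qed

definition tens_snoc :: "'q \<Rightarrow> ('q list \<Rightarrow>\<^sub>0 int) \<Rightarrow> ('q list \<Rightarrow>\<^sub>0 int)" where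
  "tens_snoc x g = frag_extend (\<lambda>ys. frag_of (ys @ [x])) g"

lemma tens_snoc_of [simp]: "tens_snoc x (frag_of ys) = frag_of (ys @ [x])"
  by (simp add: tens_snoc_def)

lemma tens_snoc_tens_rel: "g \<in> tens_rel S n \<Longrightarrow> tens_snoc x g \<in> tens_rel S (Suc n)"
proof (induction g rule: tens_rel.induct)
  case (additive us a vs b)
  then show ?case
    using tens_rel.additive[of us a "vs @ [x]" "Suc n" b S] by (simp add: tens_snoc_def frag_extend_diff)
next
  case (balanced us a b vs r)
  then show ?case
    using tens_rel.balanced[of us a b "vs @ [x]" "Suc n" S r] by (simp add: tens_snoc_def frag_extend_diff)
qed (simp_all add: tens_snoc_def frag_extend_add frag_extend_minus tens_rel.intros)

lemma tens_cong_snoc: "tens_cong S n g h \<Longrightarrow> tens_cong S (Suc n) (tens_snoc x g) (tens_snoc x h)"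
  unfolding tens_cong_def by (drule tens_snoc_tens_rel[of _ _ _ x]) (simp add: tens_snoc_def frag_extend_diff)

section \<open>The left unit for \<open>\<iota>\<^sub>Q\<^sup>i\<close>\<close>

lemma FS'_identities: "FS' S \<Longrightarrow> (\<lambda>q. q) \<in> FPQ S \<and> (\<lambda>p. p) \<in> FQP S"
proof -
  assume "FS' S"
  then obtain \<Theta> \<Phi> where "\<Theta> \<in> FPQ S" "\<forall>q. \<Theta> q = q" "\<Phi> \<in> FQP S" "\<forall>p. \<Phi> p = p"
    by (auto simp: FS'_def)
  moreover from this have "\<Theta> = (\<lambda>q. q)" "\<Phi> = (\<lambda>p. p)" by auto
  ultimately show ?thesis by simp
qed

context covariant_rep
begin

lemma frag_eval_tens_rel: "g \<in> tens_rel S n \<Longrightarrow> frag_eval iQn g = 0"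
proof (induction g rule: tens_rel.induct)
  case (additive us a vs b)
  then show ?case by (simp add: frag_eval_diff lprod_mid_add)
next
  case (balanced us a b vs r)
  have "lprod [iQ (rQ S a r), iQ b] = lprod [iQ a, iQ (lQ S r b)]"
    by (simp add: mult.assoc)
  then show ?case
    using lprod_mid_cong[of "[iQ (rQ S a r), iQ b]" "[iQ a, iQ (lQ S r b)]" "map iQ us" "map iQ vs"]
    by (simp add: frag_eval_diff del: iQ_rQ iQ_lQ)
qed (simp_all add: frag_eval_add frag_eval_uminus)

lemma frag_eval_tens_cong: "tens_cong S n g h \<Longrightarrow> frag_eval iQn g = frag_eval iQn h"
  unfolding tens_cong_def by (drule frag_eval_tens_rel) (simp add: frag_eval_diff)

lemma Fpi_eval: "Fpi S n iQ iP \<Theta> e \<Longrightarrow> length xs = n \<Longrightarrow> 0 < n \<Longrightarrow> e * iQn xs = frag_eval iQn (\<Theta> xs)"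
proof (induction rule: Fpi.induct)
  case (gen qs ps)
  then obtain rs r where "qs = rs @ [r]" by (cases qs rule: rev_cases) auto
  moreover have "iPn ps * iQn xs = iR (psi_list S ps xs)"
    using gen by (intro iPn_mult_iQn) auto
  ultimately show ?case by (simp add: mult.assoc rQ_list_def Q.lprod_mult_iR)
qed (simp_all add: frag_eval_add frag_eval_uminus distrib_right)

definition Fpi_represents :: "nat \<Rightarrow> ('q list \<Rightarrow> 'q \<Rightarrow> ('q list \<Rightarrow>\<^sub>0 int)) \<Rightarrow> bool" where
  "Fpi_represents n G \<longleftrightarrow> (\<exists>\<Theta> e. Fpi S (Suc n) iQ iP \<Theta> e \<and>
     (\<forall>xs x. length xs = n \<longrightarrow> tens_cong S (Suc n) (\<Theta> (xs @ [x])) (G xs x)))"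

lemma Fpi_represents_zero: "Fpi_represents n (\<lambda>_ _. 0)"
  unfolding Fpi_represents_def using Fpi.zero by fastforce

lemma Fpi_represents_add:
  assumes "Fpi_represents n G" "Fpi_represents n H"
  shows "Fpi_represents n (\<lambda>xs x. G xs x + H xs x)"
proof -
  obtain \<Theta>1 e1 \<Theta>2 e2 where \<Theta>: "Fpi S (Suc n) iQ iP \<Theta>1 e1" "Fpi S (Suc n) iQ iP \<Theta>2 e2"
    "\<forall>xs x. length xs = n \<longrightarrow> tens_cong S (Suc n) (\<Theta>1 (xs @ [x])) (G xs x)"
    "\<forall>xs x. length xs = n \<longrightarrow> tens_cong S (Suc n) (\<Theta>2 (xs @ [x])) (H xs x)"
    using assms unfolding Fpi_represents_def by blast
  show ?thesis
    unfolding Fpi_represents_def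
    by (rule exI[of _ "\<lambda>xs. \<Theta>1 xs + \<Theta>2 xs"], rule exI[of _ "e1 + e2"])
       (simp add: Fpi.add[OF \<Theta>(1,2)] \<Theta>(3,4) tens_cong_add)
qed

lemma Fpi_represents_uminus:
  assumes "Fpi_represents n G"
  shows "Fpi_represents n (\<lambda>xs x. - G xs x)"
proof -
  obtain \<Theta> e where \<Theta>: "Fpi S (Suc n) iQ iP \<Theta> e"
    "\<forall>xs x. length xs = n \<longrightarrow> tens_cong S (Suc n) (\<Theta> (xs @ [x])) (G xs x)"
    using assms unfolding Fpi_represents_def by blast
  show ?thesis
    unfolding Fpi_represents_def
    by (rule exI[of _ "\<lambda>xs. - \<Theta> xs"], rule exI[of _ "- e"])
       (simp add: Fpi.neg[OF \<Theta>(1)] \<Theta>(2) tens_cong_uminus)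
qed

lemma Fpi_represents_cong:
  assumes "Fpi_represents n G" "\<And>xs x. length xs = n \<Longrightarrow> tens_cong S (Suc n) (G xs x) (H xs x)"
  shows "Fpi_represents n H"
proof -
  obtain \<Theta> e where \<Theta>: "Fpi S (Suc n) iQ iP \<Theta> e"
    "\<forall>xs x. length xs = n \<longrightarrow> tens_cong S (Suc n) (\<Theta> (xs @ [x])) (G xs x)"
    using assms(1) unfolding Fpi_represents_def by blast
  then show ?thesis
    unfolding Fpi_represents_def using assms(2) by (blast intro: tens_cong_trans)
qed

lemma Fpi_represents_FPQ:
  assumes "f \<in> FPQ S" "length qs = n" "length ps = n"
  shows "Fpi_represents n (\<lambda>xs x. frag_of (qs @ [f (lQ S (psi_list S ps xs) x)]))"
  using assms(1)
proof (induction rule: FPQ.induct)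
  case zero
  show ?case
  proof (rule Fpi_represents_cong[OF Fpi_represents_zero], rule tens_cong_sym)
    show "tens_cong S (Suc n) (frag_of (qs @ [0])) 0" for xs x
      using tens_cong_zero_entry[of qs 0 "[]" "Suc n" S] assms(2) by simp
  qed
next
  case (gen q p)
  let ?\<Theta> = "\<lambda>xs. frag_of (rQ_list S (qs @ [q]) (psi_list S (p # ps) xs))"
  have "Fpi S (Suc n) iQ iP ?\<Theta> (iQn (qs @ [q]) * iPn (p # ps))"
    using assms(2,3) by (intro Fpi.gen) simp_all
  moreover have "?\<Theta> (xs @ [x]) = frag_of (qs @ [rQ S q (psi S p (lQ S (psi_list S ps xs) x))])"
    if "length xs = n" for xs x
    using that assms(2,3) by (cases "ps = []") (simp_all add: rQ_list_def psi_balanced)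
  ultimately show ?case
    unfolding Fpi_represents_def by (intro exI[of _ ?\<Theta>] exI conjI allI impI) simp_all
next
  case (add f g)
  show ?case
  proof (rule Fpi_represents_cong[OF Fpi_represents_add[OF add.IH]], rule tens_cong_sym)
    show "tens_cong S (Suc n) (frag_of (qs @ [f y + g y])) (frag_of (qs @ [f y]) + frag_of (qs @ [g y]))"
      for y
      using tens_cong_additive[of qs "f y" "[]" "Suc n" S "g y"] assms(2) by simp
  qed
next
  case (neg f)
  show ?case
  proof (rule Fpi_represents_cong[OF Fpi_represents_uminus[OF neg.IH]], rule tens_cong_sym)
    show "tens_cong S (Suc n) (frag_of (qs @ [- f y])) (- frag_of (qs @ [f y]))" for y
      using tens_cong_uminus_entry[of qs "f y" "[]" "Suc n" S] assms(2) by simp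
  qed
qed

text \<open>A generator \<open>\<theta>\<^sub>q\<^sub>s\<^sub>,\<^sub>p\<^sub>s\<close> tensored with the identity of Q is reached through the
  decomposition of the identity from (FS'), once \<open>\<psi>\<^sub>n(ps \<otimes> xs)\<close> has been moved across the last
  tensor sign.\<close>

lemma Fpi_represents_snoc:
  assumes "(\<lambda>q. q) \<in> FPQ S" "Fpi S (Suc n) iQ iP \<Theta> e"
  shows "Fpi_represents (Suc n) (\<lambda>xs x. tens_snoc x (\<Theta> xs))"
  using assms(2)
proof (induction rule: Fpi.induct)
  case zero
  show ?case using Fpi_represents_zero by (simp add: tens_snoc_def)
next
  case (gen qs ps)
  then obtain rs r where qs: "qs = rs @ [r]" by (cases qs rule: rev_cases) auto
  show ?case
  proof (rule Fpi_represents_cong[OF Fpi_represents_FPQ[OF assms(1) gen]])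
    fix xs :: "'q list" and x
    assume "length xs = Suc n"
    show "tens_cong S (Suc (Suc n)) (frag_of (qs @ [lQ S (psi_list S ps xs) x]))
        (tens_snoc x (frag_of (rQ_list S qs (psi_list S ps xs))))"
      using tens_cong_balanced[of rs r x "[]" "Suc (Suc n)" S] gen.hyps
      by (auto simp: qs rQ_list_def intro: tens_cong_sym)
  qed
next
  case (add \<Theta>1 e1 \<Theta>2 e2)
  show ?case
    using Fpi_represents_add[OF add.IH] by (simp only: tens_snoc_def frag_extend_add)
next
  case (neg \<Theta> e)
  show ?case
    using Fpi_represents_uminus[OF neg.IH] by (simp only: tens_snoc_def frag_extend_minus)
qed

lemma Fpi_represents_identity:
  assumes "(\<lambda>q. q) \<in> FPQ S"
  shows "Fpi_represents n (\<lambda>xs x. frag_of (xs @ [x]))"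
proof (induction n)
  case 0
  show ?case by (rule Fpi_represents_cong[OF Fpi_represents_FPQ[OF assms, of "[]" 0 "[]"]]) auto
next
  case (Suc n)
  then obtain \<Theta> e where \<Theta>: "Fpi S (Suc n) iQ iP \<Theta> e"
    "\<forall>xs x. length xs = n \<longrightarrow> tens_cong S (Suc n) (\<Theta> (xs @ [x])) (frag_of (xs @ [x]))"
    unfolding Fpi_represents_def by blast
  show ?case
  proof (rule Fpi_represents_cong[OF Fpi_represents_snoc[OF assms \<Theta>(1)]])
    fix ys :: "'q list" and y
    assume "length ys = Suc n"
    then obtain xs x where "ys = xs @ [x]" "length xs = n" by (cases ys rule: rev_cases) auto
    then show "tens_cong S (Suc (Suc n)) (tens_snoc y (\<Theta> ys)) (frag_of (ys @ [y]))"
      using tens_cong_snoc[of S "Suc n" "\<Theta> ys" "frag_of ys" y] \<Theta>(2) by simp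
  qed
qed

lemma Fpi_identity_exists:
  assumes "(\<lambda>q. q) \<in> FPQ S" "0 < n"
  shows "\<exists>\<Theta> e. Fpi S n iQ iP \<Theta> e \<and> (\<forall>xs. length xs = n \<longrightarrow> tens_cong S n (\<Theta> xs) (frag_of xs))"
proof -
  obtain m where n: "n = Suc m" using assms(2) by (cases n) auto
  obtain \<Theta> e where \<Theta>: "Fpi S n iQ iP \<Theta> e"
    "\<forall>xs x. length xs = m \<longrightarrow> tens_cong S n (\<Theta> (xs @ [x])) (frag_of (xs @ [x]))"
    using Fpi_represents_identity[OF assms(1), of m] unfolding Fpi_represents_def n by blast
  show ?thesis
  proof (intro exI conjI allI impI)
    show "Fpi S n iQ iP \<Theta> e" by (fact \<Theta>(1))
    fix ys :: "'q list"
    assume "length ys = n"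
    then obtain xs x where "ys = xs @ [x]" "length xs = m" using n by (cases ys rule: rev_cases) auto
    then show "tens_cong S n (\<Theta> ys) (frag_of ys)" using \<Theta>(2) by simp
  qed
qed

section \<open>The right unit for \<open>\<iota>\<^sub>P\<^sup>i\<close>\<close>

definition Fgen :: "nat \<Rightarrow> 'b set" where
  "Fgen n = {iQn qs * iPn ps | qs ps. length qs = n \<and> length ps = n}"

lemma Fgen_intro: "length qs = n \<Longrightarrow> length ps = n \<Longrightarrow> iQn qs * iPn ps \<in> Fgen n"
  unfolding Fgen_def by blast

lemma Fpi_in_span_Fgen: "Fpi S n iQ iP \<Theta> e \<Longrightarrow> e \<in> add_span (Fgen n)"
  by (induction rule: Fpi.induct) (auto intro: add_span.intros Fgen_intro)

lemma FQP_in_span_Fgen_one: "f \<in> FQP S \<Longrightarrow> \<exists>E \<in> add_span (Fgen 1). \<forall>y. iP y * E = iP (f y)"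
proof (induction rule: FQP.induct)
  case zero
  show ?case by (rule bexI[of _ 0]) (auto intro: add_span.zero)
next
  case (gen q p)
  have "iQ q * iP p \<in> Fgen 1"
    using Fgen_intro[of "[q]" 1 "[p]"] by simp
  then show ?case by (auto intro!: bexI[of _ "iQ q * iP p"] add_span.gen simp: mult.assoc)
next
  case (add f g)
  then obtain E1 E2 where "E1 \<in> add_span (Fgen 1)" "\<forall>y. iP y * E1 = iP (f y)"
    "E2 \<in> add_span (Fgen 1)" "\<forall>y. iP y * E2 = iP (g y)" by blast
  then show ?case by (auto intro!: bexI[of _ "E1 + E2"] add_span.add simp: distrib_left)
next
  case (neg f)
  then obtain E where "E \<in> add_span (Fgen 1)" "\<forall>y. iP y * E = iP (f y)" by blast
  then show ?case by (auto intro!: bexI[of _ "- E"] add_span.neg)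
qed

lemma Fgen_wrap: "x \<in> add_span (Fgen n) \<Longrightarrow> 0 < n \<Longrightarrow> iQ q * x * iP p \<in> add_span (Fgen (Suc n))"
proof (induction x rule: add_span.induct)
  case (gen a)
  then obtain qs ps where a: "a = iQn qs * iPn ps" "length qs = n" "length ps = n"
    by (auto simp: Fgen_def)
  moreover have "qs \<noteq> []" "ps \<noteq> []" using a \<open>0 < n\<close> by auto
  ultimately have "iQ q * a * iP p = iQn (q # qs) * iPn (ps @ [p])"
    by (simp add: lprod_Cons lprod_snoc mult.assoc)
  moreover have "iQn (q # qs) * iPn (ps @ [p]) \<in> Fgen (Suc n)"
    using a by (intro Fgen_intro) simp_all
  ultimately show ?case by (simp add: add_span.gen)
qed (simp_all add: distrib_left distrib_right add_span.intros)

text \<open>A generator \<open>\<iota>\<^sub>Q(q) \<iota>\<^sub>P(p')\<close> of the level-one unit is replaced by \<open>\<iota>\<^sub>Q(q) E \<iota>\<^sub>P(p')\<close>: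
  against \<open>\<iota>\<^sub>P\<^sup>n(ps) \<iota>\<^sub>P(p)\<close> the scalar \<open>\<psi>(p \<otimes> q)\<close> is absorbed into the last entry of ps,
  where E acts as the identity.\<close>

lemma Fgen_right_unit_Suc:
  assumes E: "E \<in> add_span (Fgen n)" "\<forall>ps. length ps = n \<longrightarrow> iPn ps * E = iPn ps" "0 < n"
    and c: "c \<in> add_span (Fgen 1)"
  shows "\<exists>E' \<in> add_span (Fgen (Suc n)).
    \<forall>ps p. length ps = n \<longrightarrow> iPn ps * iP p * E' = iPn ps * iP p * c"
  using c
proof (induction c rule: add_span.induct)
  case zero
  show ?case by (rule bexI[of _ 0]) (auto intro: add_span.zero)
next
  case (gen a)
  then obtain q p' where a: "a = iQ q * iP p'"
    by (auto simp: Fgen_def length_Suc_conv)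
  have "iPn ps * iP p * (iQ q * E * iP p') = iPn ps * iP p * a" if ps_n: "length ps = n" for ps p
  proof -
    obtain rs r where ps: "ps = rs @ [r]" using ps_n \<open>0 < n\<close> by (cases ps rule: rev_cases) auto
    let ?ps' = "rs @ [rP S r (psi S p q)]"
    have eq: "iPn ps * iP p * iQ q = iPn ?ps'"
      using P.lprod_mult_iR[of rs r "psi S p q"] by (simp add: ps mult.assoc)
    have unit: "iPn ?ps' * E = iPn ?ps'" using E(2)[rule_format, of ?ps'] ps_n ps by simp
    have "iPn ps * iP p * (iQ q * E * iP p') = (iPn ps * iP p * iQ q) * E * iP p'"
      by (simp only: mult.assoc)
    also have "\<dots> = iPn ?ps' * iP p'" by (simp only: eq unit)
    also have "\<dots> = iPn ps * iP p * a" by (simp only: eq[symmetric] a mult.assoc)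
    finally show ?thesis .
  qed
  then show ?case using Fgen_wrap[OF E(1,3)] by blast
next
  case (add x y)
  then obtain E1 E2 where "E1 \<in> add_span (Fgen (Suc n))" "E2 \<in> add_span (Fgen (Suc n))"
    "\<forall>ps p. length ps = n \<longrightarrow> iPn ps * iP p * E1 = iPn ps * iP p * x"
    "\<forall>ps p. length ps = n \<longrightarrow> iPn ps * iP p * E2 = iPn ps * iP p * y" by blast
  then show ?case by (auto intro!: bexI[of _ "E1 + E2"] add_span.add simp: distrib_left)
next
  case (neg x)
  then obtain E1 where "E1 \<in> add_span (Fgen (Suc n))"
    "\<forall>ps p. length ps = n \<longrightarrow> iPn ps * iP p * E1 = iPn ps * iP p * x" by blast
  then show ?case by (auto intro!: bexI[of _ "- E1"] add_span.neg)
qed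

lemma Fgen_right_unit_exists:
  assumes "(\<lambda>p. p) \<in> FQP S" "0 < n"
  shows "\<exists>E \<in> add_span (Fgen n). \<forall>ps. length ps = n \<longrightarrow> iPn ps * E = iPn ps"
  using assms(2)
proof (induction n rule: nat_induct_non_zero)
  case 1
  obtain E where "E \<in> add_span (Fgen 1)" "\<forall>p. iP p * E = iP p"
    using FQP_in_span_Fgen_one[OF assms(1)] by auto
  then show ?case by (intro bexI) (auto simp: length_Suc_conv)
next
  case (Suc n)
  then obtain E where E: "E \<in> add_span (Fgen n)" "\<forall>ps. length ps = n \<longrightarrow> iPn ps * E = iPn ps"
    by blast
  obtain E1 where E1: "E1 \<in> add_span (Fgen 1)" "\<forall>p. iP p * E1 = iP p"
    using FQP_in_span_Fgen_one[OF assms(1)] by auto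
  obtain E' where E': "E' \<in> add_span (Fgen (Suc n))"
    "\<forall>ps p. length ps = n \<longrightarrow> iPn ps * iP p * E' = iPn ps * iP p * E1"
    using Fgen_right_unit_Suc[OF E Suc(1) E1(1)] by blast
  have "iPn ps * E' = iPn ps" if ps_n: "length ps = Suc n" for ps
  proof -
    obtain rs r where ps: "ps = rs @ [r]" "length rs = n" using ps_n by (cases ps rule: rev_cases) auto
    moreover have "rs \<noteq> []" using ps(2) Suc(1) by auto
    ultimately have "iPn ps = iPn rs * iP r" by (simp add: lprod_snoc)
    then show ?thesis using E'(2) E1(2) ps(2) by (simp add: mult.assoc)
  qed
  then show ?case using E'(1) by blast
qed

section \<open>The elements \<open>\<epsilon>\<^sub>i\<close>\<close>

lemma eps_pos_units:
  assumes "FS' S" "0 < i"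
  shows "eps S iR iQ iP i \<in> add_span (Fgen i)"
    and "length xs = i \<Longrightarrow> eps S iR iQ iP i * iQn xs = iQn xs"
    and "length ps = i \<Longrightarrow> iPn ps * eps S iR iQ iP i = iPn ps"
proof -
  let ?\<epsilon> = "eps S iR iQ iP i"
  have ids: "(\<lambda>q. q) \<in> FPQ S" "(\<lambda>p. p) \<in> FQP S" using FS'_identities[OF assms(1)] by auto
  define P where "P e \<longleftrightarrow>
    (\<exists>\<Theta>. Fpi S i iQ iP \<Theta> e \<and> (\<forall>xs. length xs = i \<longrightarrow> \<Theta> xs - frag_of xs \<in> tens_rel S i))" for e
  have "\<exists>e. P e"
    using Fpi_identity_exists[OF ids(1) assms(2)] by (auto simp: P_def tens_cong_def)
  moreover have "?\<epsilon> = (SOME e. P e)"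
    unfolding eps_def P_def using assms(2) by simp
  ultimately have "P ?\<epsilon>" using someI_ex by metis
  then obtain \<Theta> where \<Theta>: "Fpi S i iQ iP \<Theta> ?\<epsilon>"
    "\<And>xs. length xs = i \<Longrightarrow> tens_cong S i (\<Theta> xs) (frag_of xs)"
    by (auto simp: P_def tens_cong_def)
  have span: "?\<epsilon> \<in> add_span (Fgen i)" by (rule Fpi_in_span_Fgen[OF \<Theta>(1)])
  have left: "?\<epsilon> * iQn xs = iQn xs" if "length xs = i" for xs
    using Fpi_eval[OF \<Theta>(1) that assms(2)] frag_eval_tens_cong[OF \<Theta>(2)[OF that]] by simp
  obtain E where E: "E \<in> add_span (Fgen i)" "\<And>ps. length ps = i \<Longrightarrow> iPn ps * E = iPn ps"
    using Fgen_right_unit_exists[OF ids(2) assms(2)] by blast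
  have "g * E = g" "?\<epsilon> * g = g" if g: "g \<in> Fgen i" for g
  proof -
    obtain qs ps where "g = iQn qs * iPn ps" "length qs = i" "length ps = i"
      using g by (auto simp: Fgen_def)
    then show "g * E = g" "?\<epsilon> * g = g" by (simp_all add: mult.assoc E(2), simp add: left flip: mult.assoc)
  qed
  then have "?\<epsilon> = ?\<epsilon> * E" "?\<epsilon> * E = E"
    using add_span_right_unit[OF _ span] add_span_left_unit[OF _ E(1)] by metis+
  then have "?\<epsilon> = E" by simp
  then show "?\<epsilon> \<in> add_span (Fgen i)" "length xs = i \<Longrightarrow> ?\<epsilon> * iQn xs = iQn xs"
    "length ps = i \<Longrightarrow> iPn ps * ?\<epsilon> = iPn ps"
    using span left E(2) by simp_all
qed

lemma eps_mult_Qimg: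
  assumes "FS' S" "a \<in> Qimg iR iQ m" "i \<le> m"
  shows "eps S iR iQ iP i * a = a"
proof (cases "i = 0")
  case True
  then show ?thesis using Q.iR_one_mult_Qimg[OF assms(2)] by (simp add: eps_def)
next
  case False
  from assms(2) show ?thesis
  proof (cases rule: Q.Qimg_cases)
    case (2 qs)
    show ?thesis
    proof (cases "m = i")
      case True
      then show ?thesis using 2 eps_pos_units(2)[OF assms(1)] False by simp
    next
      case False
      then have "iQn qs = iQn (take i qs) * iQn (drop i qs)"
        using lprod_take_drop[of i "map iQ qs"] 2 assms(3) \<open>i \<noteq> 0\<close> by (simp add: take_map drop_map)
      then show ?thesis
        using 2 eps_pos_units(2)[OF assms(1), of i "take i qs"] assms(3) \<open>i \<noteq> 0\<close>
        by (simp add: mult.assoc[symmetric])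
    qed
  qed (use False assms(3) in simp)
qed

lemma Pimg_mult_eps:
  assumes "FS' S" "b \<in> Pimg iR iP n" "i \<le> n"
  shows "b * eps S iR iQ iP i = b"
proof (cases "i = 0")
  case True
  then show ?thesis using Pimg_mult_iR_one[OF assms(2)] by (simp add: eps_def)
next
  case False
  from assms(2) show ?thesis
  proof (cases rule: Pimg_cases)
    case (2 ps)
    show ?thesis
    proof (cases "n = i")
      case True
      then show ?thesis using 2 eps_pos_units(3)[OF assms(1)] False by simp
    next
      case False
      then have "iPn ps = iPn (take (n - i) ps) * iPn (drop (n - i) ps)"
        using lprod_take_drop[of "n - i" "map iP ps"] 2 assms(3) \<open>i \<noteq> 0\<close>
        by (simp add: take_map drop_map)
      then show ?thesis
        using 2 eps_pos_units(3)[OF assms(1), of i "drop (n - i) ps"] assms(3) \<open>i \<noteq> 0\<close>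
        by (simp add: mult.assoc)
    qed
  qed (use False assms(3) in simp)
qed

lemma eps_mult_Tdeg: "FS' S \<Longrightarrow> s \<in> Tdeg iR iQ iP (int i) \<Longrightarrow> eps S iR iQ iP i * s = s"
  unfolding Tdeg_eq
  by (erule add_span_left_unit[rotated]) (auto simp: Tgen_def mult.assoc[symmetric] eps_mult_Qimg)

lemma Tdeg_mult_eps: "FS' S \<Longrightarrow> t \<in> Tdeg iR iQ iP (- int i) \<Longrightarrow> t * eps S iR iQ iP i = t"
  unfolding Tdeg_eq
  by (erule add_span_right_unit[rotated]) (auto simp: Tgen_def mult.assoc Pimg_mult_eps)

lemma eps_in_set_prod:
  assumes "FS' S"
  shows "eps S iR iQ iP i \<in> set_prod (Tdeg iR iQ iP (int i)) (Tdeg iR iQ iP (- int i))"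
proof (cases "i = 0")
  case True
  have "iR 1 \<in> Tdeg iR iQ iP 0" using Qimg_subset_Tdeg[of "iR 1" 0] by (simp add: Qimg_def)
  then have "iR 1 * iR 1 \<in> set_prod (Tdeg iR iQ iP 0) (Tdeg iR iQ iP 0)"
    unfolding set_prod_def by (blast intro: add_span.gen)
  then show ?thesis using True by (simp add: eps_def flip: iR_mult)
next
  case False
  have "iQn qs * iPn ps \<in> set_prod (Tdeg iR iQ iP (int i)) (Tdeg iR iQ iP (- int i))"
    if "length qs = i" "length ps = i" for qs ps
    using that False Qimg_subset_Tdeg[OF Q.lprod_in_Qimg] Pimg_subset_Tdeg[OF lprod_in_Pimg]
    unfolding set_prod_def by (blast intro: add_span.gen)
  then have "Fgen i \<subseteq> set_prod (Tdeg iR iQ iP (int i)) (Tdeg iR iQ iP (- int i))"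
    by (auto simp: Fgen_def)
  then show ?thesis
    using add_span_minimal eps_pos_units(1)[OF assms] False unfolding set_prod_def by blast
qed

lemma eps_mult_set_prod:
  assumes "FS' S" "x \<in> set_prod (Tdeg iR iQ iP (int i)) (Tdeg iR iQ iP (- int i))"
  shows "eps S iR iQ iP i * x = x"
  using assms(2) unfolding set_prod_def
  by (rule add_span_left_unit[rotated]) (auto simp: mult.assoc[symmetric] eps_mult_Tdeg[OF assms(1)])

lemma set_prod_mult_eps:
  assumes "FS' S" "x \<in> set_prod (Tdeg iR iQ iP (int i)) (Tdeg iR iQ iP (- int i))"
  shows "x * eps S iR iQ iP i = x"
  using assms(2) unfolding set_prod_def
  by (rule add_span_right_unit[rotated]) (auto simp: mult.assoc Tdeg_mult_eps[OF assms(1)])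

end

theorem mainTheorem10:
  fixes S :: "('r::ring_1, 'p::ab_group_add, 'q::ab_group_add) rsys"
    and iP :: "'p \<Rightarrow> 'b::ring" and iQ :: "'q \<Rightarrow> 'b" and iR :: "'r \<Rightarrow> 'b"
  assumes "unital_rsystem S"
    and "FS' S"
    and "toeplitz_rep S iP iQ iR TYPE('c::ring)"
  shows "\<forall>i::nat.
     (\<forall>s \<in> Tdeg iR iQ iP (int i). eps S iR iQ iP i * s = s) \<and>
     (\<forall>t \<in> Tdeg iR iQ iP (- int i). t * eps S iR iQ iP i = t) \<and>
     (let I = set_prod (Tdeg iR iQ iP (int i)) (Tdeg iR iQ iP (- int i));
          T0 = Tdeg iR iQ iP 0
      in I \<subseteq> T0 \<and>
         (\<forall>a \<in> T0. \<forall>x \<in> I. a * x \<in> I \<and> x * a \<in> I) \<and>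
         eps S iR iQ iP i \<in> I \<and>
         (\<forall>x \<in> I. eps S iR iQ iP i * x = x \<and> x * eps S iR iQ iP i = x))"
proof -
  interpret covariant_rep S iP iQ iR
    using assms(1,3) by unfold_locales (auto simp: toeplitz_rep_def)
  show ?thesis
    unfolding Let_def
    using eps_mult_Tdeg[OF assms(2)] Tdeg_mult_eps[OF assms(2)] set_prod_Tdeg_subset set_prod_Tdeg_ideal
      eps_in_set_prod[OF assms(2)] eps_mult_set_prod[OF assms(2)] set_prod_mult_eps[OF assms(2)]
    by blast
qed

end
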